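(* Consider the saturated Poisson log-linear model with corner-point constraints fitted to an $l^m$ contingency table. Suppose exactly one cell has a zero count, $y_{\mathbf{i}}=0$ for some $\mathbf{i}=(i_1,\dots,i_m)\in L$, and all other counts are positive. Let $e_0=\{j: i_j\neq 0\}$. Then the parameter corresponding to that cell, $\theta^{e_0}_{(i_j)_{j\in e_0}}$ (the intercept $\theta$ if $e_0=\emptyset$), is nonestimable. So is every parameter associated with a higher order interaction given it, i.e. every $\theta^{e}_{\mathbf{k}}$ with $e\supsetneq e_0$, $k_j=i_j$ for $j\in e_0$, and $k_j\in\{1,\dots,l-1\}$ for $j\in e\setminus e_0$.
   Context: Cells of an $l^m$ table are indexed by $\mathbf{i}=(i_1,\dots,i_m)\in L=\{0,1,\dots,l-1\}^m$, so there are $n=l^m$ cells. The counts $y_{\mathbf{i}}$ are observations of independent Poisson variables $Y_{\mathbf{i}}$ with means $\mu_{\mathbf{i}}>0$. Saturated log-linear model with corner-point constraints: for $e\subseteq\{1,\dots,m\}$, $\mathbf{i}_e=(i_j)_{j\in e}$ and $\operatorname{supp}(\mathbf{i})=\{j:i_j\neq 0\}$, $$\log\mu_{\mathbf{i}}=\sum_{e\subseteq \operatorname{supp}(\mathbf{i})}\theta^{e}_{\mathbf{i}_e}.$$ Any parameter involving level $0$ of some variable is set to zero, so the free parameters are $\theta^{e}_{\mathbf{k}}$ with $\mathbf{k}\in\{1,\dots,l-1\}^{e}$. The case $e=\emptyset$ is the intercept $\theta$. There are $p=l^m$ parameters, collected in $\boldsymbol\theta$. Equivalently $\log\boldsymbol\mu=A\boldsymbol\theta$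 for an $n\times p$ 0/1 design matrix $A$. The parameter corresponding to cell $\mathbf{i}$ is the parameter with the largest set of variables in its superscript among those appearing in $\log\mu_{\mathbf{i}}$, namely $\theta^{\operatorname{supp}(\mathbf{i})}_{\mathbf{i}_{\operatorname{supp}(\mathbf{i})}}$. Derivative matrix: the $p\times n$ matrix $D$ with entries $D_{s\mathbf{i}}=\partial (y_{\mathbf{i}}\log\mu_{\mathbf{i}})/\partial\theta_s$, i.e. $D_{s\mathbf{i}}=y_{\mathbf{i}}A_{\mathbf{i}s}$. The model is parameter redundant if $\operatorname{rank}D<p$. A parameter $\theta_s$ is estimable if the $s$-th entry of $\boldsymbol\alpha$ is $0$ for every vector $\boldsymbol\alpha$ with $\boldsymbol\alpha^{\mathsf T}D=\mathbf 0$; otherwise it is nonestimable. *)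

theory Defs
  imports Complex_Main
begin

text \<open>Cells of an l^m table: i :: nat => nat with i j < l for j < m, and i j = 0 for j >= m
  (canonical extension outside the m coordinates, indices 0..m-1 stand for variables 1..m).\<close>
definition cells :: "nat \<Rightarrow> nat \<Rightarrow> (nat \<Rightarrow> nat) set" where
  "cells l m = {i. (\<forall>j<m. i j < l) \<and> (\<forall>j. m \<le> j \<longrightarrow> i j = 0)}"

definition supp :: "(nat \<Rightarrow> nat) \<Rightarrow> nat set" where
  "supp i = {j. i j \<noteq> 0}"

text \<open>Free parameters theta^e_k: e a subset of the variables, k in {1..l-1}^e
  (k stored as a function, canonically 0 outside e). (\<emptyset>, \<lambda>_. 0) is the intercept.\<close>
definition params :: "nat \<Rightarrow> nat \<Rightarrow> (nat set \<times> (nat \<Rightarrow> nat)) set" where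
  "params l m = {(e, k). e \<subseteq> {..<m} \<and> (\<forall>j\<in>e. 1 \<le> k j \<and> k j < l)
                         \<and> (\<forall>j. j \<notin> e \<longrightarrow> k j = 0)}"

text \<open>Design matrix A: log mu_i = sum over e subseteq supp(i) of theta^e_(i_e).\<close>
definition design :: "(nat \<Rightarrow> nat) \<Rightarrow> (nat set \<times> (nat \<Rightarrow> nat)) \<Rightarrow> real" where
  "design i s = (if fst s \<subseteq> supp i \<and> (\<forall>j\<in>fst s. i j = snd s j) then 1 else 0)"

definition deriv_mat :: "((nat \<Rightarrow> nat) \<Rightarrow> nat) \<Rightarrow> (nat set \<times> (nat \<Rightarrow> nat)) \<Rightarrow> (nat \<Rightarrow> nat) \<Rightarrow> real" where
  "deriv_mat y s i = real (y i) * design i s"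

definition estimable :: "nat \<Rightarrow> nat \<Rightarrow> ((nat \<Rightarrow> nat) \<Rightarrow> nat) \<Rightarrow> (nat set \<times> (nat \<Rightarrow> nat)) \<Rightarrow> bool" where
  "estimable l m y s \<longleftrightarrow>
     (\<forall>\<alpha> :: (nat set \<times> (nat \<Rightarrow> nat)) \<Rightarrow> real.
        (\<forall>i\<in>cells l m. (\<Sum>t\<in>params l m. \<alpha> t * deriv_mat y t i) = 0) \<longrightarrow> \<alpha> s = 0)"

end

theory Submission
  imports Defs
begin

text \<open>For the zero cell \<open>i\<^sub>0\<close> take \<open>\<alpha>\<close> supported on the parameters lying above \<open>i\<^sub>0\<close>
  (superscript containing \<open>supp i\<^sub>0\<close>, subscript agreeing with \<open>i\<^sub>0\<close> there), with value
  \<open>(-1)^|e|\<close> on \<open>\<theta>\<^sup>e\<close>. The row of the design matrix for a cell \<open>i\<close> has its ones exactly at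
  the parameters \<open>\<theta>\<^sup>e\<^sub>i\<^sub>e\<close> with \<open>e \<subseteq> supp i\<close>, so \<open>(\<alpha>\<^sup>TA)\<^sub>i\<close> is either an empty sum or the alternating
  sum \<open>\<Sum> (-1)^|e|\<close> over the interval \<open>supp i\<^sub>0 \<subseteq> e \<subseteq> supp i\<close>, which vanishes unless
  \<open>i = i\<^sub>0\<close>. The remaining column of \<open>D\<close> is multiplied by \<open>y\<^sub>i\<^sub>0 = 0\<close>, hence \<open>\<alpha>\<^sup>TD = 0\<close>,
  and \<open>\<alpha>\<close> is nonzero at every parameter in the claim.\<close>

lemma finite_params: "finite (params l m)"
proof (rule finite_subset)
  show "params l m \<subseteq> Pow {..<m} \<times>
          {k. \<forall>j. (j \<in> {..<m} \<longrightarrow> k j \<in> {..l}) \<and> (j \<notin> {..<m} \<longrightarrow> k j = 0)}"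
    unfolding params_def by (clarsimp simp: subset_iff) (metis less_imp_le_nat zero_le)
  show "finite (Pow {..<m} \<times>
          {k. \<forall>j. (j \<in> {..<m} \<longrightarrow> k j \<in> {..l}) \<and> (j \<notin> {..<m} \<longrightarrow> (k j :: nat) = 0)})"
    by (intro finite_cartesian_product finite_Pow_iff[THEN iffD2] finite_set_of_finite_funs) auto
qed

lemma supp_subset_cells: "i \<in> cells l m \<Longrightarrow> supp i \<subseteq> {..<m}"
  unfolding cells_def supp_def by (metis (mono_tags, lifting) lessThan_iff mem_Collect_eq not_less subsetI)

lemma cell_eqI:
  assumes supp: "supp i = supp i'" and agree: "\<forall>j\<in>supp i. i j = i' j"
  shows "i = i'"
proof
  fix j
  show "i j = i' j"
  proof (cases "j \<in> supp i")
    case True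
    then show ?thesis using agree by blast
  next
    case False
    then have "j \<notin> supp i'" using supp by simp
    then show ?thesis using False by (simp add: supp_def)
  qed
qed

definition cell_param :: "(nat \<Rightarrow> nat) \<Rightarrow> nat set \<Rightarrow> nat set \<times> (nat \<Rightarrow> nat)" where
  "cell_param i e = (e, \<lambda>j. if j \<in> e then i j else 0)"

lemma cell_param_in_params:
  assumes "i \<in> cells l m" "e \<subseteq> supp i"
  shows "cell_param i e \<in> params l m"
  using assms supp_subset_cells[OF assms(1)]
  unfolding cell_param_def params_def cells_def supp_def by auto

lemma design_eq_indicator:
  assumes "t \<in> params l m"
  shows "design i t = (if t \<in> cell_param i ` Pow (supp i) then 1 else 0)"
proof -
  obtain e k where t: "t = (e, k)" and k0: "\<forall>j. j \<notin> e \<longrightarrow> k j = 0"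
    using assms unfolding params_def by auto
  have "(e \<subseteq> supp i \<and> (\<forall>j\<in>e. i j = k j)) \<longleftrightarrow> t \<in> cell_param i ` Pow (supp i)"
    using k0 unfolding t cell_param_def by (auto simp: fun_eq_iff)
  then show ?thesis
    unfolding design_def t by simp
qed

lemma sum_params_design_row:
  assumes "i \<in> cells l m"
  shows "(\<Sum>t\<in>params l m. f t * design i t) = (\<Sum>e\<in>Pow (supp i). f (cell_param i e))"
proof -
  have sub: "cell_param i ` Pow (supp i) \<subseteq> params l m"
    using cell_param_in_params[OF assms] by auto
  have "(\<Sum>t\<in>params l m. f t * design i t)
      = (\<Sum>t\<in>params l m. if t \<in> cell_param i ` Pow (supp i) then f t else 0)"
    by (intro sum.cong) (simp_all add: design_eq_indicator)
  also have "\<dots> = (\<Sum>t\<in>cell_param i ` Pow (supp i). f t)"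
    using sub by (simp add: sum.inter_restrict[OF finite_params, symmetric] Int_absorb1)
  also have "\<dots> = (\<Sum>e\<in>Pow (supp i). f (cell_param i e))"
    by (subst sum.reindex) (auto simp: inj_on_def cell_param_def)
  finally show ?thesis .
qed

definition above_cell :: "(nat \<Rightarrow> nat) \<Rightarrow> nat set \<times> (nat \<Rightarrow> nat) \<Rightarrow> bool" where
  "above_cell i0 s \<longleftrightarrow> supp i0 \<subseteq> fst s \<and> (\<forall>j\<in>supp i0. snd s j = i0 j)"

definition zero_cell_vector :: "(nat \<Rightarrow> nat) \<Rightarrow> nat set \<times> (nat \<Rightarrow> nat) \<Rightarrow> real" where
  "zero_cell_vector i0 s = (if above_cell i0 s then (-1) ^ card (fst s) else 0)"

lemma sum_interval_alternating:
  assumes "finite S" "U \<subset> S"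
  shows "(\<Sum>e | e \<subseteq> S \<and> U \<subseteq> e. (-1::real) ^ card e) = 0"
proof (rule sum_alternating_cancels)
  show "finite {e. e \<subseteq> S \<and> U \<subseteq> e}"
    using assms(1) by (rule rev_finite_subset[OF finite_Pow_iff[THEN iffD2]]) auto
  show "card {e \<in> {e. e \<subseteq> S \<and> U \<subseteq> e}. even (card e)}
      = card {e \<in> {e. e \<subseteq> S \<and> U \<subseteq> e}. odd (card e)}"
    using card_subsupersets_even_odd[OF assms] by (simp only: mem_Collect_eq conj_assoc)
qed

lemma zero_cell_vector_design_row:
  assumes i0: "i0 \<in> cells l m" and i: "i \<in> cells l m" and ne: "i \<noteq> i0"
  shows "(\<Sum>t\<in>params l m. zero_cell_vector i0 t * design i t) = 0"
proof -
  have "(\<Sum>t\<in>params l m. zero_cell_vector i0 t * design i t)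
      = (\<Sum>e\<in>Pow (supp i). zero_cell_vector i0 (cell_param i e))"
    by (rule sum_params_design_row[OF i])
  also have "\<dots> = 0"
  proof (cases "\<forall>j\<in>supp i0. i j = i0 j")
    case False
    then have "\<not> above_cell i0 (cell_param i e)" for e
      unfolding above_cell_def cell_param_def by auto
    then show ?thesis
      by (simp add: zero_cell_vector_def)
  next
    case agree: True
    then have "supp i0 \<subseteq> supp i"
      unfolding supp_def by auto
    moreover have "supp i \<noteq> supp i0"
      using cell_eqI[of i0 i] agree ne by auto
    ultimately have strict: "supp i0 \<subset> supp i" by blast
    have fin: "finite (supp i)"
      using supp_subset_cells[OF i] finite_subset by blast
    have "(\<Sum>e\<in>Pow (supp i). zero_cell_vector i0 (cell_param i e))
        = (\<Sum>e\<in>Pow (supp i). if supp i0 \<subseteq> e then (-1) ^ card e else 0)"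
      using agree
      by (intro sum.cong) (auto simp: zero_cell_vector_def above_cell_def cell_param_def)
    also have "\<dots> = (\<Sum>e | e \<subseteq> supp i \<and> supp i0 \<subseteq> e. (-1) ^ card e)"
      using fin by (simp add: sum.inter_filter[symmetric] Pow_def)
    also have "\<dots> = 0"
      by (rule sum_interval_alternating[OF fin strict])
    finally show ?thesis .
  qed
  finally show ?thesis .
qed

lemma zero_cell_vector_left_null:
  assumes i0: "i0 \<in> cells l m" and zero: "y i0 = 0" and i: "i \<in> cells l m"
  shows "(\<Sum>t\<in>params l m. zero_cell_vector i0 t * deriv_mat y t i) = 0"
proof (cases "i = i0")
  case True
  then show ?thesis
    by (simp add: deriv_mat_def zero)
next
  case False
  have "(\<Sum>t\<in>params l m. zero_cell_vector i0 t * deriv_mat y t i)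
      = real (y i) * (\<Sum>t\<in>params l m. zero_cell_vector i0 t * design i t)"
    by (simp add: deriv_mat_def sum_distrib_left mult_ac)
  then show ?thesis
    using zero_cell_vector_design_row[OF i0 i False] by simp
qed

lemma not_estimable_above_zero_cell:
  assumes "i0 \<in> cells l m" "y i0 = 0" "above_cell i0 s"
  shows "\<not> estimable l m y s"
  unfolding estimable_def
proof
  assume "\<forall>\<alpha>. (\<forall>i\<in>cells l m. (\<Sum>t\<in>params l m. \<alpha> t * deriv_mat y t i) = 0) \<longrightarrow> \<alpha> s = 0"
  moreover have "\<forall>i\<in>cells l m. (\<Sum>t\<in>params l m. zero_cell_vector i0 t * deriv_mat y t i) = 0"
    using zero_cell_vector_left_null[where y=y, OF assms(1,2)] by blast
  ultimately have "zero_cell_vector i0 s = 0"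
    by blast
  then show False
    using assms(3) by (simp add: zero_cell_vector_def)
qed

theorem theorem1:
  fixes l m :: nat and y :: "(nat \<Rightarrow> nat) \<Rightarrow> nat" and i0 :: "nat \<Rightarrow> nat"
  assumes i0: "i0 \<in> cells l m"
    and zero: "y i0 = 0"
    and pos: "\<forall>i\<in>cells l m. i \<noteq> i0 \<longrightarrow> y i > 0"
  shows "\<not> estimable l m y (supp i0, i0)
         \<and> (\<forall>e k. (e, k) \<in> params l m \<and> supp i0 \<subset> e \<and> (\<forall>j\<in>supp i0. k j = i0 j)
                  \<longrightarrow> \<not> estimable l m y (e, k))"
proof (intro conjI allI impI)
  show "\<not> estimable l m y (supp i0, i0)"
    by (rule not_estimable_above_zero_cell[where y=y, OF i0 zero]) (simp add: above_cell_def)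
  fix e k
  assume "(e, k) \<in> params l m \<and> supp i0 \<subset> e \<and> (\<forall>j\<in>supp i0. k j = i0 j)"
  then show "\<not> estimable l m y (e, k)"
    by (intro not_estimable_above_zero_cell[where y=y, OF i0 zero]) (auto simp: above_cell_def)
qed

end
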